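(* Let $f$ be a positive definite function and let $W=\{w_1,\dots,w_N\}\subset V$ be a norming set for $\mathcal{B}_M$. Then for every $x\in\mathcal{L}(G)$: (1) if $\hat{f}_k\le C_1k^{-s}$ for all $k$, with constants $C_1>0$ and $s>1$, then $$\max_{v\in V}|x(v)-\mathrm{I}_Wx(v)|\le\sqrt{\tfrac{C_1}{s-1}}\big(1+\|(\mathbf{S}_W\mathbf{B}_M)^{-1}\|\big)M^{-\frac{s-1}{2}}\|x\|_{K_f};$$ (2) if $\hat{f}_k\le C_2e^{-tk}$ for all $k$, with constants $C_2>0$ and $t>0$, then $$\max_{v\in V}|x(v)-\mathrm{I}_Wx(v)|\le\sqrt{\tfrac{C_2}{1-e^{-t}}}\big(1+\|(\mathbf{S}_W\mathbf{B}_M)^{-1}\|\big)e^{-\frac{t}{2}(M+1)}\|x\|_{K_f}.$$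
   Context: Let $G$ be a graph with vertex set $V=\{v_1,\dots,v_n\}$, symmetric non-negative weighted adjacency matrix $\mathbf{A}$, degree matrix $\mathbf{D}=\mathrm{diag}(\sum_k\mathbf{A}_{ik})$ (positive), and normalized Laplacian $\mathbf{L}=\mathbf{I}_n-\mathbf{D}^{-1/2}\mathbf{A}\mathbf{D}^{-1/2}$. Signals are vectors in $\mathcal{L}(G)\cong\mathbb{R}^n$ with euclidean norm and standard basis $e_1,\dots,e_n$. Fix an orthonormal eigendecomposition $\mathbf{L}=\mathbf{U}\,\mathrm{diag}(\lambda_1,\dots,\lambda_n)\mathbf{U}^\intercal$ with columns $u_1,\dots,u_n$. Fourier transform $\hat{x}=\mathbf{U}^\intercal x$; convolution operator $\mathbf{C}_x=\mathbf{U}\,\mathrm{diag}(\hat{x})\mathbf{U}^\intercal$. For $f\in\mathcal{L}(G)$ let $(\mathbf{K}_f)_{ij}=(\mathbf{C}_{e_j}f)(v_i)$; $f$ is a positive definite function if $\mathbf{K}_f$ is symmetric strictly positive definite; then $\|x\|_{K_f}=\sqrt{x^\intercal\mathbf{K}_f^{-1}x}$. For distinct nodes $w_k=v_{j_k}$, let $(\mathbf{K}_{f,W})_{kl}=(\mathbf{C}_{e_{j_l}}f)(w_k)$; the GBF interpolant is $\mathrm{I}_Wx=\sum_{k=1}^Nc_k\mathbf{C}_{e_{j_k}}f$ with $\mathbf{K}_{f,W}c=(x(w_1),\dots,x(w_N))^\intercal$. Let $\mathcal{B}_M=\mathrm{span}\{u_1,\dots,u_M\}$, $\mathbf{S}_Wx(v)=x(v)$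 for $v\in W$ and $0$ otherwise, $\mathbf{B}_Mx=\sum_{k=1}^M(u_k^\intercal x)u_k$. $W$ is a norming set for $\mathcal{B}_M$ if $\mathbf{S}_W\mathbf{B}_M$ is injective on $\mathcal{B}_M$; $\|(\mathbf{S}_W\mathbf{B}_M)^{-1}\|$ is the euclidean operator norm of the inverse of $\mathbf{S}_W\mathbf{B}_M|_{\mathcal{B}_M}$ on its image $\mathbf{S}_W(\mathcal{B}_M)$. *)

theory Defs
  imports Complex_Main
begin

text \<open>Conventions: the graph has vertices v_1..v_n, identified with indices 1..n.
Signals are functions nat => real of which only the values on {1..n} matter.
U i k is the i-th entry of the k-th eigenvector u_k.\<close>

definition vnorm :: "nat \<Rightarrow> (nat \<Rightarrow> real) \<Rightarrow> real" where
  "vnorm n x = sqrt (\<Sum>i=1..n. (x i)^2)"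

definition gdegree :: "nat \<Rightarrow> (nat \<Rightarrow> nat \<Rightarrow> real) \<Rightarrow> nat \<Rightarrow> real" where
  "gdegree n A i = (\<Sum>k=1..n. A i k)"

definition nlap :: "nat \<Rightarrow> (nat \<Rightarrow> nat \<Rightarrow> real) \<Rightarrow> nat \<Rightarrow> nat \<Rightarrow> real" where
  "nlap n A i j = (if i = j then 1 else 0) - A i j / sqrt (gdegree n A i * gdegree n A j)"

definition orthonormal_eigdec ::
  "nat \<Rightarrow> (nat \<Rightarrow> nat \<Rightarrow> real) \<Rightarrow> (nat \<Rightarrow> nat \<Rightarrow> real) \<Rightarrow> (nat \<Rightarrow> real) \<Rightarrow> bool" where
  "orthonormal_eigdec n L U lam \<longleftrightarrow>
     (\<forall>k\<in>{1..n}. \<forall>l\<in>{1..n}. (\<Sum>i=1..n. U i k * U i l) = (if k = l then 1 else 0)) \<and>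
     (\<forall>i\<in>{1..n}. \<forall>j\<in>{1..n}. L i j = (\<Sum>k=1..n. U i k * lam k * U j k))"

definition gft :: "nat \<Rightarrow> (nat \<Rightarrow> nat \<Rightarrow> real) \<Rightarrow> (nat \<Rightarrow> real) \<Rightarrow> nat \<Rightarrow> real" where
  "gft n U x k = (\<Sum>i=1..n. U i k * x i)"

definition gconv :: "nat \<Rightarrow> (nat \<Rightarrow> nat \<Rightarrow> real) \<Rightarrow> (nat \<Rightarrow> real) \<Rightarrow> (nat \<Rightarrow> real) \<Rightarrow> nat \<Rightarrow> real" where
  "gconv n U x y i = (\<Sum>k=1..n. U i k * gft n U x k * gft n U y k)"

definition unitvec :: "nat \<Rightarrow> nat \<Rightarrow> real" where
  "unitvec j = (\<lambda>i. if i = j then 1 else 0)"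

definition gkernel :: "nat \<Rightarrow> (nat \<Rightarrow> nat \<Rightarrow> real) \<Rightarrow> (nat \<Rightarrow> real) \<Rightarrow> nat \<Rightarrow> nat \<Rightarrow> real" where
  "gkernel n U f i j = gconv n U (unitvec j) f i"

definition pd_function :: "nat \<Rightarrow> (nat \<Rightarrow> nat \<Rightarrow> real) \<Rightarrow> (nat \<Rightarrow> real) \<Rightarrow> bool" where
  "pd_function n U f \<longleftrightarrow>
     (\<forall>i\<in>{1..n}. \<forall>j\<in>{1..n}. gkernel n U f i j = gkernel n U f j i) \<and>
     (\<forall>x. (\<exists>i\<in>{1..n}. x i \<noteq> 0) \<longrightarrow>
        (\<Sum>i=1..n. \<Sum>j=1..n. x i * gkernel n U f i j * x j) > 0)"

definition mat_inv_on :: "nat \<Rightarrow> (nat \<Rightarrow> nat \<Rightarrow> real) \<Rightarrow> nat \<Rightarrow> nat \<Rightarrow> real" where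
  "mat_inv_on n K = (THE B. (\<forall>i j. (i \<notin> {1..n} \<or> j \<notin> {1..n}) \<longrightarrow> B i j = 0) \<and>
     (\<forall>i\<in>{1..n}. \<forall>j\<in>{1..n}. (\<Sum>k=1..n. K i k * B k j) = (if i = j then 1 else 0)))"

definition native_norm :: "nat \<Rightarrow> (nat \<Rightarrow> nat \<Rightarrow> real) \<Rightarrow> (nat \<Rightarrow> real) \<Rightarrow> (nat \<Rightarrow> real) \<Rightarrow> real" where
  "native_norm n U f x =
     sqrt (\<Sum>i=1..n. \<Sum>j=1..n. x i * mat_inv_on n (gkernel n U f) i j * x j)"

text \<open>GBF interpolant on the node set W (a set of indices): sum over w_k in W of
  c_k C_{e_{j_k}} f, with K_{f,W} c = x|_W.  Coefficients are indexed by the nodes.\<close>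
definition gbf_interp ::
  "nat \<Rightarrow> (nat \<Rightarrow> nat \<Rightarrow> real) \<Rightarrow> (nat \<Rightarrow> real) \<Rightarrow> nat set \<Rightarrow> (nat \<Rightarrow> real) \<Rightarrow> nat \<Rightarrow> real" where
  "gbf_interp n U f W x =
     (let c = (THE c. (\<forall>j. j \<notin> W \<longrightarrow> c j = 0) \<and>
                      (\<forall>k\<in>W. (\<Sum>l\<in>W. gconv n U (unitvec l) f k * c l) = x k))
      in (\<lambda>i. \<Sum>k\<in>W. c k * gconv n U (unitvec k) f i))"

definition bandlim :: "nat \<Rightarrow> (nat \<Rightarrow> nat \<Rightarrow> real) \<Rightarrow> nat \<Rightarrow> (nat \<Rightarrow> real) set" where
  "bandlim n U M = {y. \<exists>a. y = (\<lambda>i. if i \<in> {1..n} then (\<Sum>k=1..M. a k * U i k) else 0)}"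

definition bandproj :: "nat \<Rightarrow> (nat \<Rightarrow> nat \<Rightarrow> real) \<Rightarrow> nat \<Rightarrow> (nat \<Rightarrow> real) \<Rightarrow> nat \<Rightarrow> real" where
  "bandproj n U M x = (\<lambda>i. if i \<in> {1..n} then (\<Sum>k=1..M. gft n U x k * U i k) else 0)"

definition sampling :: "nat set \<Rightarrow> (nat \<Rightarrow> real) \<Rightarrow> nat \<Rightarrow> real" where
  "sampling W x = (\<lambda>i. if i \<in> W then x i else 0)"

definition norming_set :: "nat \<Rightarrow> (nat \<Rightarrow> nat \<Rightarrow> real) \<Rightarrow> nat \<Rightarrow> nat set \<Rightarrow> bool" where
  "norming_set n U M W \<longleftrightarrow> inj_on (sampling W \<circ> bandproj n U M) (bandlim n U M)"

text \<open>Euclidean operator norm of the inverse of S_W B_M restricted to B_M, on its image: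
  sup over nonzero z = S_W B_M y (y in B_M) of ||y|| / ||z||.\<close>
definition inv_sampling_norm :: "nat \<Rightarrow> (nat \<Rightarrow> nat \<Rightarrow> real) \<Rightarrow> nat \<Rightarrow> nat set \<Rightarrow> real" where
  "inv_sampling_norm n U M W =
     Sup {vnorm n y / vnorm n z | y z. y \<in> bandlim n U M \<and>
            z = sampling W (bandproj n U M y) \<and> vnorm n z \<noteq> 0}"

end

theory Submission
  imports Defs "HOL-Analysis.L2_Norm"
begin

(* Everything is diagonalised by the graph Fourier transform: K_f = U diag(f^) U^T, so
   ||x||_{K_f}^2 = sum_k x^_k^2 / f^_k, and the interpolant is I_W x = K_f b with b supported on W.
   The error e = x - I_W x vanishes on W, is K_f-orthogonal to I_W x, hence ||e||_{K_f} <= ||x||_{K_f}.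
   For a node v the norming property yields a signal a supported on W whose first M Fourier
   coefficients are those of the unit vector e_v and with ||a|| <= ||(S_W B_M)^-1||. Then
   e(v) = <e_v - a, e> only involves the frequencies k > M, and a weighted Cauchy-Schwarz inequality gives
   |e(v)| <= sqrt (max_{k>M} f^_k) (1 + ||(S_W B_M)^-1||) ||x||_{K_f}. The two decay hypotheses bound
   max_{k>M} f^_k by C1 M^(1-s) / (s-1) and by C2 e^(-t(M+1)) / (1 - e^(-t)). *)

definition pos_def_on :: "'a set \<Rightarrow> ('a \<Rightarrow> 'a \<Rightarrow> real) \<Rightarrow> bool" where
  "pos_def_on S G \<longleftrightarrow> (\<forall>c. (\<exists>i\<in>S. c i \<noteq> 0) \<longrightarrow> (\<Sum>i\<in>S. \<Sum>j\<in>S. c i * G i j * c j) > 0)"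

lemma pos_def_on_subset:
  assumes "pos_def_on T G" and "S \<subseteq> T" and "finite T"
  shows "pos_def_on S G"
  unfolding pos_def_on_def
proof (intro allI impI)
  fix c :: "'a \<Rightarrow> real"
  assume "\<exists>i\<in>S. c i \<noteq> 0"
  define c' where "c' i = (if i \<in> S then c i else 0)" for i
  have "\<exists>i\<in>T. c' i \<noteq> 0"
    using assms(2) \<open>\<exists>i\<in>S. c i \<noteq> 0\<close> by (auto simp: c'_def)
  then have "(\<Sum>i\<in>T. \<Sum>j\<in>T. c' i * G i j * c' j) > 0"
    using assms(1) unfolding pos_def_on_def by blast
  also have "(\<Sum>i\<in>T. \<Sum>j\<in>T. c' i * G i j * c' j) = (\<Sum>i\<in>S. \<Sum>j\<in>T. c' i * G i j * c' j)"
    using assms(2,3) by (intro sum.mono_neutral_right) (auto simp: c'_def)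
  also have "\<dots> = (\<Sum>i\<in>S. \<Sum>j\<in>S. c i * G i j * c j)"
    using assms(2,3) by (intro sum.cong refl trans[OF sum.mono_neutral_right]) (auto simp: c'_def)
  finally show "(\<Sum>i\<in>S. \<Sum>j\<in>S. c i * G i j * c j) > 0" .
qed

lemma pos_def_on_solution_unique:
  assumes "pos_def_on S G"
    and "\<forall>j. j \<notin> S \<longrightarrow> c j = 0" and "\<forall>k\<in>S. (\<Sum>l\<in>S. G k l * c l) = r k"
    and "\<forall>j. j \<notin> S \<longrightarrow> d j = 0" and "\<forall>k\<in>S. (\<Sum>l\<in>S. G k l * d l) = r k"
  shows "c = d"
proof
  fix i
  define z where "z l = c l - d l" for l
  have "(\<Sum>k\<in>S. \<Sum>l\<in>S. z k * G k l * z l) = (\<Sum>k\<in>S. z k * (\<Sum>l\<in>S. G k l * z l))"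
    by (simp add: sum_distrib_left mult.assoc)
  also have "\<dots> = 0"
    using assms(3,5) by (simp add: z_def right_diff_distrib sum_subtractf)
  finally have "\<forall>k\<in>S. z k = 0"
    using assms(1) unfolding pos_def_on_def by force
  then show "c i = d i"
    using assms(2,4) by (cases "i \<in> S") (auto simp: z_def)
qed

lemma pos_def_on_schur_complement_pos:
  assumes "pos_def_on (insert w S) G" and "w \<notin> S" and "finite S"
    and sym: "\<forall>i\<in>S. G i w = G w i"
    and q: "\<forall>k\<in>S. (\<Sum>l\<in>S. G k l * q l) = G k w"
  shows "G w w - (\<Sum>l\<in>S. G w l * q l) > 0"
proof -
  define v where "v j = (if j = w then 1 else - q j)" for j
  have v_S: "v i = - q i" if "i \<in> S" for i
    using that \<open>w \<notin> S\<close> by (auto simp: v_def)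
  have "v w \<noteq> 0"
    by (simp add: v_def)
  then have "(\<Sum>i\<in>insert w S. \<Sum>j\<in>insert w S. v i * G i j * v j) > 0"
    using assms(1) unfolding pos_def_on_def by blast
  also have "(\<Sum>i\<in>insert w S. \<Sum>j\<in>insert w S. v i * G i j * v j)
      = G w w + (\<Sum>j\<in>S. G w j * v j) + (\<Sum>i\<in>S. v i * G i w) + (\<Sum>i\<in>S. \<Sum>j\<in>S. v i * G i j * v j)"
    using \<open>w \<notin> S\<close> \<open>finite S\<close> by (simp add: v_def sum.distrib)
  also have "(\<Sum>i\<in>S. \<Sum>j\<in>S. v i * G i j * v j) = (\<Sum>i\<in>S. q i * (\<Sum>j\<in>S. G i j * q j))"
    by (simp add: v_S sum_distrib_left mult.assoc mult.left_commute)
  also have "\<dots> = (\<Sum>i\<in>S. q i * G i w)"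
    using q by simp
  also have "(\<Sum>i\<in>S. v i * G i w) = - (\<Sum>i\<in>S. q i * G i w)"
    by (simp add: v_S sum_negf)
  also have "(\<Sum>j\<in>S. G w j * v j) = - (\<Sum>i\<in>S. q i * G i w)"
    using sym by (simp add: v_S sum_negf mult.commute)
  finally have "G w w - (\<Sum>i\<in>S. q i * G i w) > 0"
    by simp
  also have "(\<Sum>i\<in>S. q i * G i w) = (\<Sum>l\<in>S. G w l * q l)"
    using sym by (simp add: mult.commute)
  finally show ?thesis .
qed

lemma pos_def_on_solvable:
  assumes "finite S" and "\<forall>i\<in>S. \<forall>j\<in>S. G i j = G j i" and "pos_def_on S G"
  shows "\<exists>c. (\<forall>j. j \<notin> S \<longrightarrow> c j = 0) \<and> (\<forall>k\<in>S. (\<Sum>l\<in>S. G k l * c l) = r k)"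
  using assms
proof (induction S arbitrary: r rule: finite_induct)
  case empty
  show ?case
    by (rule exI[of _ "\<lambda>_. 0"]) simp
next
  case (insert w S)
  have sym: "\<forall>i\<in>S. \<forall>j\<in>S. G i j = G j i"
    using insert.prems(1) by blast
  have pd: "pos_def_on S G"
    using pos_def_on_subset[OF insert.prems(2)] insert.hyps(1) by blast
  obtain p where p0: "\<forall>j. j \<notin> S \<longrightarrow> p j = 0" and p: "\<forall>k\<in>S. (\<Sum>l\<in>S. G k l * p l) = r k"
    using insert.IH[OF sym pd, of r] by blast
  obtain q where q0: "\<forall>j. j \<notin> S \<longrightarrow> q j = 0" and q: "\<forall>k\<in>S. (\<Sum>l\<in>S. G k l * q l) = G k w"
    using insert.IH[OF sym pd, of "\<lambda>k. G k w"] by blast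
  \<comment> \<open>The new unknown is found by dividing by the Schur complement d of the old block.\<close>
  define d where "d = G w w - (\<Sum>l\<in>S. G w l * q l)"
  have "d > 0"
    unfolding d_def using insert.prems(1)
    by (intro pos_def_on_schur_complement_pos[OF insert.prems(2) insert.hyps(2,1) _ q]) blast
  define \<beta> where "\<beta> = (r w - (\<Sum>l\<in>S. G w l * p l)) / d"
  define c where "c j = (if j = w then \<beta> else p j - \<beta> * q j)" for j
  have c_sum: "(\<Sum>l\<in>insert w S. G k l * c l)
      = G k w * \<beta> + (\<Sum>l\<in>S. G k l * p l) - \<beta> * (\<Sum>l\<in>S. G k l * q l)" for k
  proof -
    have "(\<Sum>l\<in>S. G k l * c l) = (\<Sum>l\<in>S. G k l * p l - \<beta> * (G k l * q l))"
      using insert.hyps by (intro sum.cong) (auto simp: c_def right_diff_distrib)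
    then show ?thesis
      using insert.hyps by (simp add: c_def sum_subtractf sum_distrib_left)
  qed
  have "(\<Sum>l\<in>insert w S. G k l * c l) = r k" if "k \<in> insert w S" for k
  proof (cases "k = w")
    case True
    have "G w w * \<beta> + (\<Sum>l\<in>S. G w l * p l) - \<beta> * (\<Sum>l\<in>S. G w l * q l)
        = \<beta> * d + (\<Sum>l\<in>S. G w l * p l)"
      by (simp add: d_def algebra_simps)
    also have "\<dots> = r w"
      using \<open>d > 0\<close> by (simp add: \<beta>_def)
    finally show ?thesis
      using True c_sum by simp
  next
    case False
    then show ?thesis
      using that p q by (simp add: c_sum)
  qed
  moreover have "\<forall>j. j \<notin> insert w S \<longrightarrow> c j = 0"
    using p0 q0 by (simp add: c_def)
  ultimately show ?case
    by blast
qed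

definition gram :: "'w set \<Rightarrow> ('w \<Rightarrow> 'a \<Rightarrow> real) \<Rightarrow> 'a \<Rightarrow> 'a \<Rightarrow> real" where
  "gram W \<phi> k l = (\<Sum>w\<in>W. \<phi> w k * \<phi> w l)"

lemma gram_quadratic_form:
  "(\<Sum>i\<in>S. \<Sum>j\<in>S. \<alpha> i * gram W \<phi> i j * \<alpha> j) = (\<Sum>w\<in>W. (\<Sum>k\<in>S. \<alpha> k * \<phi> w k)^2)"
  by (simp add: gram_def power2_eq_square sum_product sum_distrib_left sum_distrib_right
      mult.commute mult.left_commute sum.swap[of _ W])

lemma pos_def_on_gram:
  assumes "finite W" and inj: "\<And>\<alpha>. \<forall>w\<in>W. (\<Sum>k\<in>S. \<alpha> k * \<phi> w k) = 0 \<Longrightarrow> \<forall>k\<in>S. \<alpha> k = 0"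
  shows "pos_def_on S (gram W \<phi>)"
  unfolding pos_def_on_def gram_quadratic_form
proof (intro allI impI)
  fix c :: "_ \<Rightarrow> real"
  assume "\<exists>i\<in>S. c i \<noteq> 0"
  then obtain w where "w \<in> W" and "(\<Sum>k\<in>S. c k * \<phi> w k) \<noteq> 0"
    using inj by blast
  then show "(\<Sum>w\<in>W. (\<Sum>k\<in>S. c k * \<phi> w k)^2) > 0"
    using \<open>finite W\<close> by (intro sum_pos2) auto
qed

lemma gram_left_inverse:
  assumes "finite S" and pd: "pos_def_on S (gram W \<phi>)"
  obtains g where "\<And>\<alpha> j. j \<in> S \<Longrightarrow> \<alpha> j = (\<Sum>w\<in>W. (\<Sum>k\<in>S. \<alpha> k * \<phi> w k) * g j w)"
proof -
  have sym: "\<forall>i\<in>S. \<forall>j\<in>S. gram W \<phi> i j = gram W \<phi> j i"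
    by (simp add: gram_def mult.commute)
  have "\<forall>j\<in>S. \<exists>h. \<forall>k\<in>S. (\<Sum>l\<in>S. gram W \<phi> k l * h l) = (if k = j then 1 else 0)"
  proof
    fix j
    show "\<exists>h. \<forall>k\<in>S. (\<Sum>l\<in>S. gram W \<phi> k l * h l) = (if k = j then 1 else 0)"
      using pos_def_on_solvable[OF \<open>finite S\<close> sym pd, of "\<lambda>k. if k = j then 1 else 0"]
      by blast
  qed
  then obtain h where h: "\<And>j k. j \<in> S \<Longrightarrow> k \<in> S \<Longrightarrow>
      (\<Sum>l\<in>S. gram W \<phi> k l * h j l) = (if k = j then 1 else 0)"
    by metis
  show thesis
  proof (rule that)
    fix \<alpha> :: "_ \<Rightarrow> real" and j
    assume "j \<in> S"
    have "\<alpha> j = (\<Sum>k\<in>S. if k = j then \<alpha> k else 0)"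
      using \<open>j \<in> S\<close> \<open>finite S\<close> by simp
    also have "\<dots> = (\<Sum>k\<in>S. (\<Sum>l\<in>S. gram W \<phi> k l * h j l) * \<alpha> k)"
      using h[OF \<open>j \<in> S\<close>] by (intro sum.cong) auto
    also have "\<dots> = (\<Sum>k\<in>S. \<Sum>l\<in>S. \<Sum>w\<in>W. (\<alpha> k * \<phi> w k) * (\<phi> w l * h j l))"
      by (simp add: gram_def sum_distrib_left sum_distrib_right mult_ac)
    also have "\<dots> = (\<Sum>w\<in>W. \<Sum>k\<in>S. \<Sum>l\<in>S. (\<alpha> k * \<phi> w k) * (\<phi> w l * h j l))"
      by (simp add: sum.swap[of _ W])
    also have "\<dots> = (\<Sum>w\<in>W. (\<Sum>k\<in>S. \<alpha> k * \<phi> w k) * (\<Sum>l\<in>S. \<phi> w l * h j l))"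
      by (simp add: sum_product)
    finally show "\<alpha> j = (\<Sum>w\<in>W. (\<Sum>k\<in>S. \<alpha> k * \<phi> w k) * (\<Sum>l\<in>S. \<phi> w l * h j l))" .
  qed
qed

lemma gram_coeff_bound:
  assumes "finite S" and "pos_def_on S (gram W \<phi>)"
  shows "\<exists>C. \<forall>\<alpha>. L2_set \<alpha> S \<le> C * L2_set (\<lambda>w. \<Sum>k\<in>S. \<alpha> k * \<phi> w k) W"
proof -
  obtain g where rep: "\<And>\<alpha> j. j \<in> S \<Longrightarrow> \<alpha> j = (\<Sum>w\<in>W. (\<Sum>k\<in>S. \<alpha> k * \<phi> w k) * g j w)"
    using gram_left_inverse[OF assms] by blast
  define C where "C = (\<Sum>j\<in>S. L2_set (g j) W)"
  show ?thesis
  proof (intro exI allI)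
    fix \<alpha>
    define y where "y w = (\<Sum>k\<in>S. \<alpha> k * \<phi> w k)" for w
    have coeff_bound: "\<bar>\<alpha> j\<bar> \<le> L2_set (g j) W * L2_set y W" if "j \<in> S" for j
    proof -
      have "\<bar>\<alpha> j\<bar> \<le> (\<Sum>w\<in>W. \<bar>y w * g j w\<bar>)"
        unfolding y_def rep[OF that, of \<alpha>] by (rule sum_abs)
      also have "\<dots> = (\<Sum>w\<in>W. \<bar>y w\<bar> * \<bar>g j w\<bar>)"
        by (simp add: abs_mult)
      also have "\<dots> \<le> L2_set (g j) W * L2_set y W"
        using L2_set_mult_ineq[of y "g j" W] by (simp add: mult.commute)
      finally show ?thesis .
    qed
    have "L2_set \<alpha> S \<le> (\<Sum>j\<in>S. \<bar>\<alpha> j\<bar>)"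
      by (rule L2_set_le_sum_abs)
    also have "\<dots> \<le> (\<Sum>j\<in>S. L2_set (g j) W * L2_set y W)"
      using coeff_bound by (rule sum_mono)
    also have "\<dots> = C * L2_set y W"
      by (simp add: C_def sum_distrib_right)
    finally show "L2_set \<alpha> S \<le> C * L2_set (\<lambda>w. \<Sum>k\<in>S. \<alpha> k * \<phi> w k) W"
      unfolding y_def .
  qed
qed

lemma gram_min_norm_solution:
  assumes "finite S" and pd: "pos_def_on S (gram W \<phi>)" and "N \<ge> 0"
    and bound: "\<And>\<alpha>. L2_set \<alpha> S \<le> N * L2_set (\<lambda>w. \<Sum>k\<in>S. \<alpha> k * \<phi> w k) W"
  shows "\<exists>a. (\<forall>w. w \<notin> W \<longrightarrow> a w = 0) \<and> (\<forall>k\<in>S. (\<Sum>w\<in>W. a w * \<phi> w k) = u k)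
    \<and> L2_set a W \<le> N * L2_set u S"
proof -
  have sym: "\<forall>i\<in>S. \<forall>j\<in>S. gram W \<phi> i j = gram W \<phi> j i"
    by (simp add: gram_def mult.commute)
  obtain \<alpha> where \<alpha>: "\<forall>k\<in>S. (\<Sum>l\<in>S. gram W \<phi> k l * \<alpha> l) = u k"
    using pos_def_on_solvable[OF \<open>finite S\<close> sym pd, of u] by blast
  define a where "a w = (if w \<in> W then \<Sum>k\<in>S. \<alpha> k * \<phi> w k else 0)" for w
  have solves: "(\<Sum>w\<in>W. a w * \<phi> w k) = u k" if "k \<in> S" for k
  proof -
    have "(\<Sum>w\<in>W. a w * \<phi> w k) = (\<Sum>w\<in>W. \<Sum>l\<in>S. \<phi> w k * \<phi> w l * \<alpha> l)"
      by (simp add: a_def sum_distrib_left sum_distrib_right mult_ac)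
    also have "\<dots> = (\<Sum>l\<in>S. gram W \<phi> k l * \<alpha> l)"
      by (simp add: gram_def sum_distrib_right sum.swap[of _ W])
    finally show ?thesis
      using \<alpha> that by simp
  qed
  have "(L2_set a W)^2 = (\<Sum>w\<in>W. a w * (\<Sum>k\<in>S. \<alpha> k * \<phi> w k))"
    unfolding L2_set_def by (simp add: a_def power2_eq_square sum_nonneg)
  also have "\<dots> = (\<Sum>k\<in>S. \<alpha> k * (\<Sum>w\<in>W. a w * \<phi> w k))"
    by (simp add: sum_distrib_left sum.swap[of _ W] mult_ac)
  also have "\<dots> = (\<Sum>k\<in>S. \<alpha> k * u k)"
    using solves by simp
  also have "\<dots> \<le> (\<Sum>k\<in>S. \<bar>\<alpha> k\<bar> * \<bar>u k\<bar>)"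
    by (intro sum_mono) (metis abs_ge_self abs_mult)
  also have "\<dots> \<le> L2_set \<alpha> S * L2_set u S"
    by (rule L2_set_mult_ineq)
  also have "\<dots> \<le> N * L2_set a W * L2_set u S"
  proof -
    have "L2_set (\<lambda>w. \<Sum>k\<in>S. \<alpha> k * \<phi> w k) W = L2_set a W"
      by (rule L2_set_cong) (simp_all add: a_def)
    then show ?thesis
      using bound[of \<alpha>] by (simp add: mult_right_mono)
  qed
  finally have "L2_set a W * L2_set a W \<le> L2_set a W * (N * L2_set u S)"
    by (simp add: power2_eq_square mult_ac)
  then have "L2_set a W \<le> N * L2_set u S"
    using \<open>N \<ge> 0\<close> by (metis L2_set_nonneg mult_le_cancel_left mult_nonneg_nonneg order_le_less)
  moreover have "\<forall>w. w \<notin> W \<longrightarrow> a w = 0"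
    by (simp add: a_def)
  ultimately show ?thesis
    using solves by blast
qed

lemma weighted_Cauchy_Schwarz:
  assumes "\<forall>k\<in>K. w k > 0"
  shows "\<bar>\<Sum>k\<in>K. c k * e k\<bar> \<le> sqrt (\<Sum>k\<in>K. w k * (c k)^2) * sqrt (\<Sum>k\<in>K. (e k)^2 / w k)"
proof -
  have "(\<Sum>k\<in>K. c k * e k) = (\<Sum>k\<in>K. (sqrt (w k) * c k) * (e k / sqrt (w k)))"
    using assms by (intro sum.cong) auto
  then have "\<bar>\<Sum>k\<in>K. c k * e k\<bar> \<le> (\<Sum>k\<in>K. \<bar>sqrt (w k) * c k\<bar> * \<bar>e k / sqrt (w k)\<bar>)"
    by (simp only: abs_mult[symmetric] sum_abs)
  also have "\<dots> \<le> L2_set (\<lambda>k. sqrt (w k) * c k) K * L2_set (\<lambda>k. e k / sqrt (w k)) K"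
    by (rule L2_set_mult_ineq)
  also have "\<dots> = sqrt (\<Sum>k\<in>K. w k * (c k)^2) * sqrt (\<Sum>k\<in>K. (e k)^2 / w k)"
    unfolding L2_set_def using assms
    by (simp add: power_mult_distrib power_divide less_imp_le cong: sum.cong)
  finally show ?thesis .
qed

lemma powr_succ_le_tail_integral:
  fixes m s :: real
  assumes "1 \<le> m" and "1 < s"
  shows "(m + 1) powr (-s) \<le> m powr (1 - s) / (s - 1)"
proof -
  define q where "q = s - 1"
  have "q > 0"
    using assms(2) by (simp add: q_def)
  have "ln (m / (m + 1)) \<le> m / (m + 1) - 1"
    using assms(1) by (intro ln_le_minus_one) auto
  then have "1 / (m + 1) \<le> ln (m + 1) - ln m"
    using assms(1) by (simp add: ln_div field_simps)
  then have "q / (m + 1) \<le> q * (ln (m + 1) - ln m)"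
    using \<open>q > 0\<close> by (metis mult_left_mono times_divide_eq_right mult_1_right less_imp_le)
  also have "\<dots> \<le> exp (q * (ln (m + 1) - ln m))"
    using exp_ge_add_one_self[of "q * (ln (m + 1) - ln m)"] by linarith
  also have "\<dots> = (m + 1) powr q / m powr q"
    using assms(1) by (simp add: powr_def exp_diff right_diff_distrib mult.commute)
  finally have "q * m powr q \<le> (m + 1) * (m + 1) powr q"
    using assms(1) by (simp add: field_simps)
  then have "1 / ((m + 1) * (m + 1) powr q) \<le> 1 / (q * m powr q)"
    using assms(1) \<open>q > 0\<close> by (intro frac_le) auto
  moreover have "(m + 1) powr s = (m + 1) * (m + 1) powr q"
    using powr_add[of "m + 1" q 1] assms(1) by (simp add: q_def)
  moreover have "m powr (1 - s) = 1 / m powr q"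
    using powr_minus[of m q] by (simp add: q_def divide_inverse)
  ultimately show ?thesis
    by (simp add: powr_minus divide_inverse q_def mult.commute)
qed

locale gbf_kernel =
  fixes n :: nat and U :: "nat \<Rightarrow> nat \<Rightarrow> real" and f :: "nat \<Rightarrow> real"
  assumes orthonormal_columns:
      "\<And>k l. k \<in> {1..n} \<Longrightarrow> l \<in> {1..n} \<Longrightarrow> (\<Sum>i=1..n. U i k * U i l) = (if k = l then 1 else 0)"
    and pd: "pd_function n U f"
begin

lemma gft_unitvec: "j \<in> {1..n} \<Longrightarrow> gft n U (unitvec j) k = U j k"
  unfolding gft_def unitvec_def by (simp add: if_distrib cong: if_cong)

lemma gkernel_spectral:
  "j \<in> {1..n} \<Longrightarrow> gkernel n U f i j = (\<Sum>k=1..n. U i k * U j k * gft n U f k)"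
  unfolding gkernel_def gconv_def by (simp add: gft_unitvec)

lemma gkernel_quadratic_form:
  "(\<Sum>i=1..n. \<Sum>j=1..n. x i * gkernel n U f i j * x j) = (\<Sum>k=1..n. gft n U f k * (gft n U x k)^2)"
proof -
  have "(\<Sum>i=1..n. \<Sum>j=1..n. x i * gkernel n U f i j * x j)
      = (\<Sum>i=1..n. \<Sum>j=1..n. \<Sum>k=1..n. gft n U f k * (U i k * x i) * (U j k * x j))"
    by (intro sum.cong refl) (simp add: gkernel_spectral sum_distrib_left sum_distrib_right mult_ac)
  also have "\<dots> = (\<Sum>i=1..n. \<Sum>k=1..n. \<Sum>j=1..n. gft n U f k * (U i k * x i) * (U j k * x j))"
    by (intro sum.cong refl sum.swap)
  also have "\<dots> = (\<Sum>k=1..n. \<Sum>i=1..n. \<Sum>j=1..n. gft n U f k * (U i k * x i) * (U j k * x j))"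
    by (rule sum.swap)
  also have "\<dots> = (\<Sum>k=1..n. gft n U f k * (gft n U x k)^2)"
    by (simp add: gft_def power2_eq_square sum_distrib_left sum_distrib_right mult_ac)
  finally show ?thesis .
qed

lemma pos_def_on_gkernel: "pos_def_on {1..n} (gkernel n U f)"
  using pd unfolding pd_function_def pos_def_on_def by blast

lemma gft_synthesis: "m \<in> {1..n} \<Longrightarrow> gft n U (\<lambda>i. \<Sum>k=1..n. U i k * b k) m = b m"
proof -
  assume m: "m \<in> {1..n}"
  have "gft n U (\<lambda>i. \<Sum>k=1..n. U i k * b k) m = (\<Sum>i=1..n. \<Sum>k=1..n. U i m * U i k * b k)"
    unfolding gft_def by (simp add: sum_distrib_left mult.assoc)
  also have "\<dots> = (\<Sum>k=1..n. (\<Sum>i=1..n. U i m * U i k) * b k)"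
    by (subst sum.swap) (simp add: sum_distrib_right)
  also have "\<dots> = (\<Sum>k=1..n. if m = k then b k else 0)"
  proof (rule sum.cong[OF refl])
    fix k
    assume "k \<in> {1..n}"
    then show "(\<Sum>i=1..n. U i m * U i k) * b k = (if m = k then b k else 0)"
      using orthonormal_columns[OF m] by simp
  qed
  also have "\<dots> = b m"
    using m by simp
  finally show ?thesis .
qed

lemma gft_pos: "k \<in> {1..n} \<Longrightarrow> gft n U f k > 0"
proof -
  assume k: "k \<in> {1..n}"
  define x where "x i = U i k" for i
  have gft_x: "gft n U x m = (if m = k then 1 else 0)" if "m \<in> {1..n}" for m
    unfolding x_def gft_def using orthonormal_columns[OF that k] by (simp add: mult.commute)
  have "\<exists>i\<in>{1..n}. x i \<noteq> 0"
  proof (rule ccontr)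
    assume "\<not> ?thesis"
    then have "(\<Sum>i=1..n. U i k * U i k) = 0"
      by (simp add: x_def)
    with orthonormal_columns[OF k k] show False
      by simp
  qed
  then have "(\<Sum>i=1..n. \<Sum>j=1..n. x i * gkernel n U f i j * x j) > 0"
    using pos_def_on_gkernel unfolding pos_def_on_def by blast
  also have "\<dots> = (\<Sum>m=1..n. if m = k then gft n U f k else 0)"
    unfolding gkernel_quadratic_form by (intro sum.cong refl) (simp add: gft_x)
  also have "\<dots> = gft n U f k"
    using k by simp
  finally show ?thesis .
qed

text \<open>Only the columns of U are assumed orthonormal; the completeness of the eigenbasis,
  needed for Fourier inversion, is supplied by the positive definiteness of f.\<close>

lemma gft_eq_zero_imp_zero:
  assumes "\<And>k. k \<in> {1..n} \<Longrightarrow> gft n U x k = 0" and "i \<in> {1..n}"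
  shows "x i = 0"
proof (rule ccontr)
  assume "x i \<noteq> 0"
  then have "(\<Sum>i=1..n. \<Sum>j=1..n. x i * gkernel n U f i j * x j) > 0"
    using pos_def_on_gkernel \<open>i \<in> {1..n}\<close> unfolding pos_def_on_def by blast
  then show False
    unfolding gkernel_quadratic_form by (simp add: assms(1))
qed

lemma gft_inversion: "i \<in> {1..n} \<Longrightarrow> x i = (\<Sum>k=1..n. U i k * gft n U x k)"
proof -
  assume "i \<in> {1..n}"
  define y where "y i = x i - (\<Sum>k=1..n. U i k * gft n U x k)" for i
  have "gft n U y m = 0" if "m \<in> {1..n}" for m
  proof -
    have "gft n U y m = gft n U x m - gft n U (\<lambda>i. \<Sum>k=1..n. U i k * gft n U x k) m"
      unfolding gft_def y_def by (simp add: algebra_simps sum_subtractf)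
    then show ?thesis
      using gft_synthesis[OF that] by simp
  qed
  then have "y i = 0"
    using gft_eq_zero_imp_zero \<open>i \<in> {1..n}\<close> by blast
  then show ?thesis
    by (simp add: y_def)
qed

lemma parseval: "(\<Sum>i=1..n. x i * y i) = (\<Sum>k=1..n. gft n U x k * gft n U y k)"
proof -
  have "(\<Sum>i=1..n. x i * y i) = (\<Sum>i=1..n. x i * (\<Sum>k=1..n. U i k * gft n U y k))"
    using gft_inversion[of _ y] by (intro sum.cong refl) simp
  also have "\<dots> = (\<Sum>i=1..n. \<Sum>k=1..n. U i k * x i * gft n U y k)"
    by (simp add: sum_distrib_left mult_ac)
  also have "\<dots> = (\<Sum>k=1..n. gft n U x k * gft n U y k)"
    unfolding gft_def[of n U x] by (subst sum.swap) (simp add: sum_distrib_right)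
  finally show ?thesis .
qed

lemma L2_set_gft: "L2_set (gft n U x) {1..n} = L2_set x {1..n}"
  unfolding L2_set_def using parseval[of x x] by (simp add: power2_eq_square)

lemma orthonormal_rows:
  "i \<in> {1..n} \<Longrightarrow> j \<in> {1..n} \<Longrightarrow> (\<Sum>k=1..n. U i k * U j k) = (if i = j then 1 else 0)"
  using gft_inversion[of i "unitvec j"] gft_unitvec[of j] by (simp add: unitvec_def)

lemma gkernel_mult_spectral:
  "(\<Sum>m=1..n. gkernel n U f i m * z m) = (\<Sum>k=1..n. U i k * (gft n U f k * gft n U z k))"
proof -
  have "(\<Sum>m=1..n. gkernel n U f i m * z m) = (\<Sum>m=1..n. \<Sum>k=1..n. U i k * gft n U f k * (U m k * z m))"
    by (intro sum.cong refl) (simp add: gkernel_spectral sum_distrib_left sum_distrib_right mult_ac)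
  also have "\<dots> = (\<Sum>k=1..n. U i k * (gft n U f k * gft n U z k))"
    by (subst sum.swap) (simp add: gft_def sum_distrib_left mult_ac)
  finally show ?thesis .
qed

lemma gft_gkernel_mult:
  "m \<in> {1..n} \<Longrightarrow> gft n U (\<lambda>i. \<Sum>l=1..n. gkernel n U f i l * z l) m = gft n U f m * gft n U z m"
  unfolding gkernel_mult_spectral by (rule gft_synthesis)

lemma gkernel_mult_spectral_inverse:
  assumes "i \<in> {1..n}" and "j \<in> {1..n}"
  shows "(\<Sum>m=1..n. gkernel n U f i m * (\<Sum>k=1..n. U m k * U j k / gft n U f k))
    = (if i = j then 1 else 0)"
proof -
  have gft_column: "gft n U (\<lambda>m. \<Sum>k=1..n. U m k * U j k / gft n U f k) k = U j k / gft n U f k"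
    if "k \<in> {1..n}" for k
    using gft_synthesis[OF that, of "\<lambda>l. U j l / gft n U f l"] by simp
  have "(\<Sum>m=1..n. gkernel n U f i m * (\<Sum>k=1..n. U m k * U j k / gft n U f k))
      = (\<Sum>k=1..n. U i k * U j k)"
    unfolding gkernel_mult_spectral
  proof (rule sum.cong[OF refl])
    fix k
    assume "k \<in> {1..n}"
    then show "U i k * (gft n U f k * gft n U (\<lambda>m. \<Sum>k=1..n. U m k * U j k / gft n U f k) k)
        = U i k * U j k"
      using gft_pos[of k] gft_column[of k] by simp
  qed
  also have "\<dots> = (if i = j then 1 else 0)"
    using orthonormal_rows assms by simp
  finally show ?thesis .
qed

lemma mat_inv_on_gkernel:
  "mat_inv_on n (gkernel n U f) =
    (\<lambda>i j. if i \<in> {1..n} \<and> j \<in> {1..n} then \<Sum>k=1..n. U i k * U j k / gft n U f k else 0)"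
  (is "_ = ?B")
proof -
  define P where "P B \<longleftrightarrow> (\<forall>i j. (i \<notin> {1..n} \<or> j \<notin> {1..n}) \<longrightarrow> B i j = 0) \<and>
    (\<forall>i\<in>{1..n}. \<forall>j\<in>{1..n}. (\<Sum>k=1..n. gkernel n U f i k * B k j) = (if i = j then 1 else 0))"
    for B
  have inverse: "(\<Sum>m=1..n. gkernel n U f i m * ?B m j) = (if i = j then 1 else 0)"
    if "i \<in> {1..n}" and "j \<in> {1..n}" for i j
  proof -
    have "(\<Sum>m=1..n. gkernel n U f i m * ?B m j)
        = (\<Sum>m=1..n. gkernel n U f i m * (\<Sum>k=1..n. U m k * U j k / gft n U f k))"
      using \<open>j \<in> {1..n}\<close> by (intro sum.cong refl) simp
    then show ?thesis
      using gkernel_mult_spectral_inverse[OF that] by simp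
  qed
  have "P ?B"
    unfolding P_def using inverse by auto
  moreover have "B = ?B" if "P B" for B
  proof (intro ext)
    fix i j
    show "B i j = ?B i j"
    proof (cases "j \<in> {1..n}")
      case True
      have "(\<lambda>l. B l j) = (\<lambda>l. ?B l j)"
        by (rule pos_def_on_solution_unique[OF pos_def_on_gkernel, where r = "\<lambda>k. if k = j then 1 else 0"])
          (use that inverse True in \<open>auto simp: P_def\<close>)
      then show ?thesis
        by (rule fun_cong)
    next
      case False
      then show ?thesis
        using that unfolding P_def by auto
    qed
  qed
  ultimately have "(THE B. P B) = ?B"
    by (rule the_equality)
  then show ?thesis
    unfolding mat_inv_on_def P_def .
qed

lemma native_norm_spectral:
  "native_norm n U f x = sqrt (\<Sum>k=1..n. (gft n U x k)^2 / gft n U f k)"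
proof -
  have "(\<Sum>i=1..n. \<Sum>j=1..n. x i * mat_inv_on n (gkernel n U f) i j * x j)
      = (\<Sum>i=1..n. \<Sum>j=1..n. \<Sum>k=1..n. (U i k * x i) * (U j k * x j) / gft n U f k)"
    unfolding mat_inv_on_gkernel
    by (intro sum.cong refl) (simp add: sum_distrib_left sum_distrib_right mult_ac)
  also have "\<dots> = (\<Sum>i=1..n. \<Sum>k=1..n. \<Sum>j=1..n. (U i k * x i) * (U j k * x j) / gft n U f k)"
    by (intro sum.cong refl sum.swap)
  also have "\<dots> = (\<Sum>k=1..n. \<Sum>i=1..n. \<Sum>j=1..n. (U i k * x i) * (U j k * x j) / gft n U f k)"
    by (rule sum.swap)
  also have "\<dots> = (\<Sum>k=1..n. (gft n U x k)^2 / gft n U f k)"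
    by (simp add: gft_def power2_eq_square sum_distrib_left sum_distrib_right sum_divide_distrib mult_ac)
  finally show ?thesis
    unfolding native_norm_def by simp
qed

lemma partial_native_norm_le:
  assumes "K \<subseteq> {1..n}"
  shows "sqrt (\<Sum>k\<in>K. (gft n U x k)^2 / gft n U f k) \<le> native_norm n U f x"
  unfolding native_norm_spectral using assms gft_pos
  by (intro real_sqrt_le_mono sum_mono2) (auto simp: less_imp_le)

lemma partial_weighted_energy_le:
  assumes "K \<subseteq> {1..n}" and "B \<ge> 0" and "\<forall>k\<in>K. gft n U f k \<le> B"
  shows "sqrt (\<Sum>k\<in>K. gft n U f k * (gft n U c k)^2) \<le> sqrt B * L2_set c {1..n}"
proof -
  have "(\<Sum>k\<in>K. gft n U f k * (gft n U c k)^2) \<le> (\<Sum>k\<in>K. B * (gft n U c k)^2)"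
    using assms(3) by (intro sum_mono mult_right_mono) auto
  also have "\<dots> \<le> B * (\<Sum>k=1..n. (gft n U c k)^2)"
    using assms(1,2) by (simp add: sum_distrib_left[symmetric] mult_left_mono sum_mono2)
  finally have "sqrt (\<Sum>k\<in>K. gft n U f k * (gft n U c k)^2) \<le> sqrt B * L2_set (gft n U c) {1..n}"
    unfolding L2_set_def by (simp add: real_sqrt_mult[symmetric])
  then show ?thesis
    unfolding L2_set_gft .
qed

lemma gbf_interp_kernel_expansion:
  assumes "W \<subseteq> {1..n}"
  obtains b where "\<forall>j. j \<notin> W \<longrightarrow> b j = 0" and "\<forall>w\<in>W. gbf_interp n U f W x w = x w"
    and "gbf_interp n U f W x = (\<lambda>i. \<Sum>l=1..n. gkernel n U f i l * b l)"
proof -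
  have "finite W"
    using assms finite_subset by blast
  have sym: "\<forall>i\<in>W. \<forall>j\<in>W. gkernel n U f i j = gkernel n U f j i"
    using pd assms unfolding pd_function_def by blast
  have pd_W: "pos_def_on W (gkernel n U f)"
    using pos_def_on_subset[OF pos_def_on_gkernel assms] by simp
  define P where "P c \<longleftrightarrow> (\<forall>j. j \<notin> W \<longrightarrow> c j = 0) \<and>
    (\<forall>k\<in>W. (\<Sum>l\<in>W. gconv n U (unitvec l) f k * c l) = x k)" for c
  obtain b where b: "P b"
    using pos_def_on_solvable[OF \<open>finite W\<close> sym pd_W, of x] unfolding P_def gkernel_def by blast
  have "c = b" if "P c" for c
    using pos_def_on_solution_unique[OF pd_W] b that unfolding P_def gkernel_def by blast
  then have "(THE c. P c) = b"
    using b by (intro the_equality)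
  then have interp: "gbf_interp n U f W x = (\<lambda>i. \<Sum>k\<in>W. b k * gkernel n U f i k)"
    unfolding gbf_interp_def gkernel_def P_def Let_def by simp
  show thesis
  proof (rule that)
    show "\<forall>j. j \<notin> W \<longrightarrow> b j = 0"
      using b unfolding P_def by simp
    show "\<forall>w\<in>W. gbf_interp n U f W x w = x w"
      using b unfolding interp P_def gkernel_def by (simp add: mult.commute)
    show "gbf_interp n U f W x = (\<lambda>i. \<Sum>l=1..n. gkernel n U f i l * b l)"
      unfolding interp using b assms unfolding P_def
      by (intro ext sum.mono_neutral_cong_left) (auto simp: mult.commute)
  qed
qed

lemma native_norm_interp_error_le:
  assumes "W \<subseteq> {1..n}"
  shows "native_norm n U f (\<lambda>i. x i - gbf_interp n U f W x i) \<le> native_norm n U f x"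
proof -
  obtain b where b0: "\<forall>j. j \<notin> W \<longrightarrow> b j = 0" and on_W: "\<forall>w\<in>W. gbf_interp n U f W x w = x w"
    and interp: "gbf_interp n U f W x = (\<lambda>i. \<Sum>l=1..n. gkernel n U f i l * b l)"
    using gbf_interp_kernel_expansion[OF assms] by blast
  define e where "e i = x i - gbf_interp n U f W x i" for i
  have gft_x: "gft n U x k = gft n U e k + gft n U f k * gft n U b k" if "k \<in> {1..n}" for k
  proof -
    have "gft n U e k = gft n U x k - gft n U (gbf_interp n U f W x) k"
      unfolding gft_def e_def by (simp add: right_diff_distrib sum_subtractf)
    then show ?thesis
      using gft_gkernel_mult[OF that] unfolding interp by simp
  qed
  have "(\<Sum>k=1..n. gft n U e k * gft n U b k) = (\<Sum>i=1..n. e i * b i)"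
    by (rule parseval[symmetric])
  also have "\<dots> = 0"
    using b0 on_W by (intro sum.neutral) (force simp: e_def)
  finally have orth: "(\<Sum>k=1..n. gft n U e k * gft n U b k) = 0" .
  have "0 \<le> (\<Sum>k=1..n. gft n U f k * (gft n U b k)^2)"
    using gft_pos by (intro sum_nonneg) (simp add: less_imp_le)
  then have "(\<Sum>k=1..n. (gft n U e k)^2 / gft n U f k)
      \<le> (\<Sum>k=1..n. (gft n U e k)^2 / gft n U f k + 2 * (gft n U e k * gft n U b k)
          + gft n U f k * (gft n U b k)^2)"
    using orth by (simp add: sum.distrib flip: sum_distrib_left)
  also have "\<dots> = (\<Sum>k=1..n. (gft n U x k)^2 / gft n U f k)"
  proof (rule sum.cong[OF refl])
    fix k
    assume "k \<in> {1..n}"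
    then show "(gft n U e k)^2 / gft n U f k + 2 * (gft n U e k * gft n U b k)
        + gft n U f k * (gft n U b k)^2 = (gft n U x k)^2 / gft n U f k"
      using gft_pos[of k] gft_x[of k] by (simp add: field_simps power2_eq_square)
  qed
  finally show ?thesis
    unfolding native_norm_spectral e_def by (rule real_sqrt_le_mono)
qed

end

locale gbf_norming = gbf_kernel +
  fixes W :: "nat set" and M :: nat
  assumes W_subset: "W \<subseteq> {1..n}" and M_pos: "1 \<le> M" and M_le: "M \<le> n"
    and norming: "norming_set n U M W"
begin

definition band_signal :: "(nat \<Rightarrow> real) \<Rightarrow> nat \<Rightarrow> real" where
  "band_signal \<alpha> i = (if i \<in> {1..n} then \<Sum>k=1..M. \<alpha> k * U i k else 0)"

lemma finite_W: "finite W"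
  using W_subset finite_subset by blast

lemma bandlim_eq_range: "bandlim n U M = range band_signal"
  unfolding bandlim_def band_signal_def[abs_def] by auto

lemma band_signal_on_W: "w \<in> W \<Longrightarrow> band_signal \<alpha> w = (\<Sum>k\<in>{1..M}. \<alpha> k * U w k)"
  using W_subset by (auto simp: band_signal_def)

lemma gft_band_signal: "k \<in> {1..n} \<Longrightarrow> gft n U (band_signal \<alpha>) k = (if k \<le> M then \<alpha> k else 0)"
proof -
  assume "k \<in> {1..n}"
  have "(\<Sum>l=1..M. \<alpha> l * U i l) = (\<Sum>l=1..n. U i l * (if l \<le> M then \<alpha> l else 0))" for i
    using M_le by (intro sum.mono_neutral_cong_left) (auto simp: mult.commute)
  then have "gft n U (band_signal \<alpha>) k = gft n U (\<lambda>i. \<Sum>l=1..n. U i l * (if l \<le> M then \<alpha> l else 0)) k"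
    unfolding gft_def band_signal_def by (intro sum.cong refl) simp
  then show ?thesis
    using gft_synthesis[OF \<open>k \<in> {1..n}\<close>] by simp
qed

lemma bandproj_band_signal: "bandproj n U M (band_signal \<alpha>) = band_signal \<alpha>"
proof -
  have "gft n U (band_signal \<alpha>) k = \<alpha> k" if "k \<in> {1..M}" for k
    using that M_le by (simp add: gft_band_signal)
  then show ?thesis
    unfolding bandproj_def by (auto simp: band_signal_def intro!: sum.cong)
qed

lemma vnorm_band_signal: "vnorm n (band_signal \<alpha>) = L2_set \<alpha> {1..M}"
proof -
  have "vnorm n (band_signal \<alpha>) = L2_set (gft n U (band_signal \<alpha>)) {1..n}"
    unfolding vnorm_def L2_set_gft by (simp add: L2_set_def)
  also have "\<dots> = L2_set (\<lambda>k. if k \<le> M then \<alpha> k else 0) {1..n}"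
    by (rule L2_set_cong) (simp_all add: gft_band_signal)
  also have "\<dots> = L2_set \<alpha> {1..M}"
    unfolding L2_set_def using M_le
    by (intro arg_cong[where f = sqrt] sum.mono_neutral_cong_right) auto
  finally show ?thesis .
qed

lemma vnorm_sampling: "vnorm n (sampling W y) = L2_set y W"
  unfolding vnorm_def L2_set_def sampling_def using W_subset
  by (intro arg_cong[where f = sqrt] sum.mono_neutral_cong_right) auto

lemma L2_set_band_signal_on_W:
  "L2_set (band_signal \<alpha>) W = L2_set (\<lambda>w. \<Sum>k\<in>{1..M}. \<alpha> k * U w k) W"
  by (rule L2_set_cong) (simp_all add: band_signal_on_W)

lemma band_signal_eq_zero_on_W:
  assumes "\<forall>w\<in>W. band_signal \<alpha> w = 0" and "k \<in> {1..M}"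
  shows "\<alpha> k = 0"
proof -
  have "sampling W (bandproj n U M (band_signal \<alpha>)) = sampling W (bandproj n U M (band_signal (\<lambda>_. 0)))"
    using assms(1) by (auto simp: bandproj_band_signal sampling_def band_signal_def)
  then have "band_signal \<alpha> = band_signal (\<lambda>_. 0)"
    using inj_onD[OF norming[unfolded norming_set_def bandlim_eq_range]] by (metis comp_apply rangeI)
  then have "gft n U (band_signal \<alpha>) k = gft n U (band_signal (\<lambda>_. 0)) k"
    by simp
  then show ?thesis
    using assms(2) M_le by (simp add: gft_band_signal)
qed

lemma pos_def_on_band_gram: "pos_def_on {1..M} (gram W U)"
  using finite_W by (rule pos_def_on_gram) (use band_signal_eq_zero_on_W band_signal_on_W in auto)

lemma inv_sampling_norm_eq_Sup:
  "inv_sampling_norm n U M W =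
    Sup ((\<lambda>\<alpha>. L2_set \<alpha> {1..M} / L2_set (band_signal \<alpha>) W) ` {\<alpha>. L2_set (band_signal \<alpha>) W \<noteq> 0})"
  (is "_ = Sup ?R")
proof -
  have "{vnorm n y / vnorm n z |y z. y \<in> range band_signal \<and> z = sampling W (bandproj n U M y)
      \<and> vnorm n z \<noteq> 0} = ?R" (is "?L = ?R")
  proof
    show "?L \<subseteq> ?R"
      by (auto simp: bandproj_band_signal vnorm_band_signal vnorm_sampling)
    show "?R \<subseteq> ?L"
    proof
      fix r
      assume "r \<in> ?R"
      then obtain \<alpha> where "r = L2_set \<alpha> {1..M} / L2_set (band_signal \<alpha>) W"
        and "L2_set (band_signal \<alpha>) W \<noteq> 0"
        by blast
      then show "r \<in> ?L"
        by (intro CollectI exI[of _ "band_signal \<alpha>"] exI[of _ "sampling W (band_signal \<alpha>)"])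
          (simp add: bandproj_band_signal vnorm_band_signal vnorm_sampling)
    qed
  qed
  then show ?thesis
    unfolding inv_sampling_norm_def bandlim_eq_range by simp
qed

lemma inv_sampling_norm_bound:
  "L2_set \<alpha> {1..M} \<le> inv_sampling_norm n U M W * L2_set (band_signal \<alpha>) W"
proof (cases "L2_set (band_signal \<alpha>) W = 0")
  case True
  then have "\<forall>k\<in>{1..M}. \<alpha> k = 0"
    using band_signal_eq_zero_on_W L2_set_eq_0_iff[OF finite_W] by blast
  then show ?thesis
    using True by (simp add: L2_set_0')
next
  case False
  let ?R = "(\<lambda>\<alpha>. L2_set \<alpha> {1..M} / L2_set (band_signal \<alpha>) W) ` {\<alpha>. L2_set (band_signal \<alpha>) W \<noteq> 0}"
  obtain C where C: "\<And>\<beta>. L2_set \<beta> {1..M} \<le> C * L2_set (\<lambda>w. \<Sum>k\<in>{1..M}. \<beta> k * U w k) W"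
    using gram_coeff_bound[OF _ pos_def_on_band_gram] by blast
  have C_band: "L2_set \<beta> {1..M} \<le> C * L2_set (band_signal \<beta>) W" for \<beta>
    using C by (simp add: L2_set_band_signal_on_W)
  have "bdd_above ?R"
  proof (rule bdd_aboveI)
    fix r
    assume "r \<in> ?R"
    then obtain \<beta> where r: "r = L2_set \<beta> {1..M} / L2_set (band_signal \<beta>) W"
      and "L2_set (band_signal \<beta>) W \<noteq> 0"
      by blast
    then have "L2_set (band_signal \<beta>) W > 0"
      by (simp add: less_le)
    then show "r \<le> C"
      using C_band[of \<beta>] by (simp add: r divide_le_eq mult.commute)
  qed
  then have "L2_set \<alpha> {1..M} / L2_set (band_signal \<alpha>) W \<le> inv_sampling_norm n U M W"
    unfolding inv_sampling_norm_eq_Sup using False by (intro cSup_upper) auto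
  then show ?thesis
    using False by (simp add: divide_le_eq mult.commute order_less_le)
qed

lemma inv_sampling_norm_nonneg: "0 \<le> inv_sampling_norm n U M W"
proof -
  define \<delta> :: "nat \<Rightarrow> real" where "\<delta> k = (if k = 1 then 1 else 0)" for k
  have "1 \<le> L2_set \<delta> {1..M}"
    using member_le_L2_set[of "{1..M}" 1 \<delta>] M_pos by (simp add: \<delta>_def)
  then have "1 \<le> inv_sampling_norm n U M W * L2_set (band_signal \<delta>) W"
    using inv_sampling_norm_bound[of \<delta>] by linarith
  then show ?thesis
    using L2_set_nonneg[of "band_signal \<delta>" W] by (smt (verit) mult_nonpos_nonneg)
qed

lemma sampled_representer:
  assumes "v \<in> {1..n}"
  obtains a where "\<forall>j. j \<notin> W \<longrightarrow> a j = 0" and "\<forall>k\<in>{1..M}. gft n U a k = U v k"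
    and "L2_set a {1..n} \<le> inv_sampling_norm n U M W"
proof -
  have "L2_set \<beta> {1..M} \<le> inv_sampling_norm n U M W * L2_set (\<lambda>w. \<Sum>k\<in>{1..M}. \<beta> k * U w k) W" for \<beta>
    using inv_sampling_norm_bound by (simp add: L2_set_band_signal_on_W)
  then obtain a where a0: "\<forall>j. j \<notin> W \<longrightarrow> a j = 0"
    and solves: "\<forall>k\<in>{1..M}. (\<Sum>w\<in>W. a w * U w k) = U v k"
    and norm_a: "L2_set a W \<le> inv_sampling_norm n U M W * L2_set (U v) {1..M}"
    using gram_min_norm_solution[OF _ pos_def_on_band_gram inv_sampling_norm_nonneg]
    by blast
  have sum_W: "(\<Sum>i=1..n. g i) = (\<Sum>i\<in>W. g i)" if "\<forall>i. i \<notin> W \<longrightarrow> g i = 0" for g :: "nat \<Rightarrow> real"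
    using that W_subset by (intro sum.mono_neutral_right) auto
  show thesis
  proof (rule that)
    show "\<forall>j. j \<notin> W \<longrightarrow> a j = 0"
      by (fact a0)
    have "gft n U a k = (\<Sum>w\<in>W. a w * U w k)" for k
      unfolding gft_def using a0 by (subst sum_W) (auto simp: mult.commute)
    then show "\<forall>k\<in>{1..M}. gft n U a k = U v k"
      using solves by simp
    have "L2_set (U v) {1..M} \<le> L2_set (U v) {1..n}"
      unfolding L2_set_def using M_le by (intro real_sqrt_le_mono sum_mono2) auto
    also have "\<dots> = 1"
      unfolding L2_set_def using orthonormal_rows[OF assms assms] by (simp add: power2_eq_square)
    finally have "L2_set a W \<le> inv_sampling_norm n U M W"
      using norm_a inv_sampling_norm_nonneg by (metis mult_left_le order_trans L2_set_nonneg)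
    moreover have "L2_set a {1..n} = L2_set a W"
      unfolding L2_set_def using a0 sum_W[of "\<lambda>i. (a i)^2"] by simp
    ultimately show "L2_set a {1..n} \<le> inv_sampling_norm n U M W"
      by simp
  qed
qed

lemma interp_error_eq_high_freq_sum:
  assumes "v \<in> {1..n}" and a0: "\<forall>j. j \<notin> W \<longrightarrow> a j = 0" and gft_a: "\<forall>k\<in>{1..M}. gft n U a k = U v k"
    and e0: "\<forall>w\<in>W. e w = 0"
  shows "e v = (\<Sum>k\<in>{M<..n}. gft n U (\<lambda>i. unitvec v i - a i) k * gft n U e k)"
proof -
  have "(\<Sum>i=1..n. a i * e i) = 0"
    using a0 e0 by (intro sum.neutral) (metis mult_zero_left mult_zero_right)
  moreover have "(\<Sum>i=1..n. unitvec v i * e i) = e v"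
    using \<open>v \<in> {1..n}\<close> by (simp add: unitvec_def if_distrib if_distribR cong: if_cong)
  ultimately have "e v = (\<Sum>i=1..n. (unitvec v i - a i) * e i)"
    by (simp add: left_diff_distrib sum_subtractf)
  also have "\<dots> = (\<Sum>k=1..n. gft n U (\<lambda>i. unitvec v i - a i) k * gft n U e k)"
    by (rule parseval)
  also have "\<dots> = (\<Sum>k\<in>{M<..n}. gft n U (\<lambda>i. unitvec v i - a i) k * gft n U e k)"
  proof (rule sum.mono_neutral_right)
    show "\<forall>k\<in>{1..n} - {M<..n}. gft n U (\<lambda>i. unitvec v i - a i) k * gft n U e k = 0"
    proof
      fix k
      assume "k \<in> {1..n} - {M<..n}"
      then have "gft n U (\<lambda>i. unitvec v i - a i) k = gft n U (unitvec v) k - gft n U a k"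
        and "k \<in> {1..M}"
        unfolding gft_def by (auto simp: right_diff_distrib sum_subtractf)
      then show "gft n U (\<lambda>i. unitvec v i - a i) k * gft n U e k = 0"
        using gft_a gft_unitvec[OF \<open>v \<in> {1..n}\<close>] by simp
    qed
  qed (use M_pos in auto)
  finally show ?thesis .
qed

lemma interp_error_pointwise_bound:
  assumes "v \<in> {1..n}" and "B \<ge> 0" and tail: "\<forall>k\<in>{M<..n}. gft n U f k \<le> B"
  shows "\<bar>x v - gbf_interp n U f W x v\<bar> \<le> sqrt B * (1 + inv_sampling_norm n U M W) * native_norm n U f x"
proof -
  obtain a where a0: "\<forall>j. j \<notin> W \<longrightarrow> a j = 0" and gft_a: "\<forall>k\<in>{1..M}. gft n U a k = U v k"
    and norm_a: "L2_set a {1..n} \<le> inv_sampling_norm n U M W"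
    using sampled_representer[OF \<open>v \<in> {1..n}\<close>] by blast
  define e where "e i = x i - gbf_interp n U f W x i" for i
  define c where "c i = unitvec v i - a i" for i
  let ?K = "{M<..n}"
  have K_sub: "?K \<subseteq> {1..n}"
    using M_pos by auto
  have "\<forall>w\<in>W. e w = 0"
    using gbf_interp_kernel_expansion[OF W_subset] unfolding e_def by (metis diff_self)
  then have "\<bar>e v\<bar> = \<bar>\<Sum>k\<in>?K. gft n U c k * gft n U e k\<bar>"
    using interp_error_eq_high_freq_sum[OF \<open>v \<in> {1..n}\<close> a0 gft_a] unfolding c_def by simp
  also have "\<dots> \<le> sqrt (\<Sum>k\<in>?K. gft n U f k * (gft n U c k)^2) * sqrt (\<Sum>k\<in>?K. (gft n U e k)^2 / gft n U f k)"
    using K_sub gft_pos by (intro weighted_Cauchy_Schwarz) auto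
  also have "\<dots> \<le> (sqrt B * (1 + inv_sampling_norm n U M W)) * native_norm n U f x"
  proof (rule mult_mono)
    have "L2_set c {1..n} \<le> L2_set (unitvec v) {1..n} + L2_set (\<lambda>i. - a i) {1..n}"
      unfolding c_def diff_conv_add_uminus by (rule L2_set_triangle_ineq)
    also have "L2_set (unitvec v) {1..n} = 1"
      using \<open>v \<in> {1..n}\<close> by (simp add: L2_set_def unitvec_def if_distrib[of "\<lambda>t. t^2"] cong: if_cong)
    also have "L2_set (\<lambda>i. - a i) {1..n} = L2_set a {1..n}"
      by (simp add: L2_set_def)
    finally have "L2_set c {1..n} \<le> 1 + inv_sampling_norm n U M W"
      using norm_a by simp
    then show "sqrt (\<Sum>k\<in>?K. gft n U f k * (gft n U c k)^2) \<le> sqrt B * (1 + inv_sampling_norm n U M W)"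
      using partial_weighted_energy_le[OF K_sub \<open>B \<ge> 0\<close> tail, of c] \<open>B \<ge> 0\<close>
      by (meson mult_left_mono order_trans real_sqrt_ge_zero)
    have "sqrt (\<Sum>k\<in>?K. (gft n U e k)^2 / gft n U f k) \<le> native_norm n U f e"
      by (rule partial_native_norm_le[OF K_sub])
    also have "\<dots> \<le> native_norm n U f x"
      unfolding e_def by (rule native_norm_interp_error_le[OF W_subset])
    finally show "sqrt (\<Sum>k\<in>?K. (gft n U e k)^2 / gft n U f k) \<le> native_norm n U f x" .
  qed (use \<open>B \<ge> 0\<close> inv_sampling_norm_nonneg M_pos in \<open>auto intro!: sum_nonneg divide_nonneg_pos gft_pos\<close>)
  finally show ?thesis
    by (simp add: e_def)
qed

lemma interp_error_max_bound:
  assumes "B \<ge> 0" and "\<forall>k\<in>{M<..n}. gft n U f k \<le> B"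
  shows "Max ((\<lambda>v. \<bar>x v - gbf_interp n U f W x v\<bar>) ` {1..n})
    \<le> sqrt B * (1 + inv_sampling_norm n U M W) * native_norm n U f x"
  using interp_error_pointwise_bound[OF _ assms] M_pos M_le by (simp add: Max_le_iff)

lemma interp_error_polynomial_decay:
  assumes "C1 > 0" and "s > 1" and decay: "\<forall>k\<in>{1..n}. gft n U f k \<le> C1 * real k powr (-s)"
  shows "Max ((\<lambda>v. \<bar>x v - gbf_interp n U f W x v\<bar>) ` {1..n})
    \<le> sqrt (C1 / (s - 1)) * (1 + inv_sampling_norm n U M W) * real M powr (-(s - 1) / 2)
      * native_norm n U f x"
proof -
  define B where "B = C1 / (s - 1) * real M powr (1 - s)"
  have "gft n U f k \<le> B" if "k \<in> {M<..n}" for k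
  proof -
    have "real k powr (-s) \<le> (real M + 1) powr (-s)"
      using that \<open>s > 1\<close> by (intro powr_mono2') auto
    also have "\<dots> \<le> real M powr (1 - s) / (s - 1)"
      using powr_succ_le_tail_integral[of "real M" s] M_pos \<open>s > 1\<close> by simp
    finally have "C1 * real k powr (-s) \<le> C1 * (real M powr (1 - s) / (s - 1))"
      using \<open>C1 > 0\<close> by (intro mult_left_mono) auto
    then have "C1 * real k powr (-s) \<le> B"
      by (simp add: B_def)
    moreover have "k \<in> {1..n}"
      using that M_pos by auto
    ultimately show ?thesis
      using decay by (meson order_trans)
  qed
  moreover have "B \<ge> 0"
    using \<open>C1 > 0\<close> \<open>s > 1\<close> by (simp add: B_def)
  moreover have "sqrt (real M powr (1 - s)) = real M powr (-(s - 1) / 2)"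
    using powr_half_sqrt_powr[of "real M" "1 - s"] by simp
  then have "sqrt B = sqrt (C1 / (s - 1)) * real M powr (-(s - 1) / 2)"
    unfolding B_def real_sqrt_mult by simp
  ultimately show ?thesis
    using interp_error_max_bound[of B x] by (simp add: mult_ac)
qed

lemma interp_error_exponential_decay:
  assumes "C2 > 0" and "t > 0" and decay: "\<forall>k\<in>{1..n}. gft n U f k \<le> C2 * exp (-t * real k)"
  shows "Max ((\<lambda>v. \<bar>x v - gbf_interp n U f W x v\<bar>) ` {1..n})
    \<le> sqrt (C2 / (1 - exp (-t))) * (1 + inv_sampling_norm n U M W) * exp (-(t / 2) * (real M + 1))
      * native_norm n U f x"
proof -
  define B where "B = C2 / (1 - exp (-t)) * exp (-t * (real M + 1))"
  have "exp (-t) < 1"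
    using \<open>t > 0\<close> by simp
  have "gft n U f k \<le> B" if "k \<in> {M<..n}" for k
  proof -
    have "exp (-t * real k) \<le> exp (-t * (real M + 1))"
      using that \<open>t > 0\<close> by simp
    also have "\<dots> \<le> exp (-t * (real M + 1)) / (1 - exp (-t))"
      using \<open>exp (-t) < 1\<close> by (simp add: le_divide_eq)
    finally have "C2 * exp (-t * real k) \<le> C2 * (exp (-t * (real M + 1)) / (1 - exp (-t)))"
      using \<open>C2 > 0\<close> by (intro mult_left_mono) auto
    then have "C2 * exp (-t * real k) \<le> B"
      by (simp add: B_def)
    moreover have "k \<in> {1..n}"
      using that M_pos by auto
    ultimately show ?thesis
      using decay by (meson order_trans)
  qed
  moreover have "B \<ge> 0"
    using \<open>C2 > 0\<close> \<open>exp (-t) < 1\<close> by (simp add: B_def)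
  moreover have "sqrt (exp (-t * (real M + 1))) = exp (-(t / 2) * (real M + 1))"
    by (simp add: real_sqrt_unique power2_eq_square exp_add[symmetric])
  then have "sqrt B = sqrt (C2 / (1 - exp (-t))) * exp (-(t / 2) * (real M + 1))"
    unfolding B_def real_sqrt_mult by simp
  ultimately show ?thesis
    using interp_error_max_bound[of B x] by (simp add: mult_ac)
qed

end

theorem corollary2:
  fixes n M :: nat and A U :: "nat \<Rightarrow> nat \<Rightarrow> real" and lam f x :: "nat \<Rightarrow> real"
    and W :: "nat set"
  assumes A_sym: "\<forall>i\<in>{1..n}. \<forall>j\<in>{1..n}. A i j = A j i"
    and A_nonneg: "\<forall>i\<in>{1..n}. \<forall>j\<in>{1..n}. A i j \<ge> 0"
    and deg_pos: "\<forall>i\<in>{1..n}. gdegree n A i > 0"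
    and eig: "orthonormal_eigdec n (nlap n A) U lam"
    and pd: "pd_function n U f"
    and W_sub: "W \<subseteq> {1..n}"
    and M_range: "1 \<le> M" "M \<le> n"
    and norming: "norming_set n U M W"
  shows
    "(\<forall>C1 s. C1 > 0 \<and> s > 1 \<and> (\<forall>k\<in>{1..n}. gft n U f k \<le> C1 * real k powr (-s)) \<longrightarrow>
        Max ((\<lambda>v. \<bar>x v - gbf_interp n U f W x v\<bar>) ` {1..n})
          \<le> sqrt (C1 / (s - 1)) * (1 + inv_sampling_norm n U M W)
             * real M powr (-(s - 1) / 2) * native_norm n U f x)
   \<and> (\<forall>C2 t. C2 > 0 \<and> t > 0 \<and> (\<forall>k\<in>{1..n}. gft n U f k \<le> C2 * exp (-t * real k)) \<longrightarrow>
        Max ((\<lambda>v. \<bar>x v - gbf_interp n U f W x v\<bar>) ` {1..n})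
          \<le> sqrt (C2 / (1 - exp (-t))) * (1 + inv_sampling_norm n U M W)
             * exp (-(t / 2) * (real M + 1)) * native_norm n U f x)"
proof -
  have "\<And>k l. k \<in> {1..n} \<Longrightarrow> l \<in> {1..n} \<Longrightarrow> (\<Sum>i=1..n. U i k * U i l) = (if k = l then 1 else 0)"
    using eig unfolding orthonormal_eigdec_def by blast
  then interpret gbf_norming n U f W M
    using pd W_sub M_range norming by unfold_locales auto
  show ?thesis
    using interp_error_polynomial_decay interp_error_exponential_decay by blast
qed

end
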